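(* Let $\mathcal{A}$ be a complex Banach algebra with identity, let $a\in\mathcal{A}$ and let $(a_n)$ be a sequence in $\mathcal{A}$ such that $a_na=aa_n$ and $a_na_m=a_ma_n$ for all $n,m\in\mathbb{N}$. If $a_n\overset{\nu}{\to}a$ and $0$ is an accumulation point of $\sigma(a)$, then $\sigma(a_n)\to\sigma(a)$ in the Hausdorff metric.
   Context: $\sigma(x)$ denotes the spectrum of $x$ in $\mathcal{A}$. A sequence $(x_n)$ in $\mathcal{A}$ is $\nu$-convergent to $x$, written $x_n\overset{\nu}{\to}x$, if $(\|x_n\|)$ is bounded, $\|(x_n-x)x\|\to0$ and $\|(x_n-x)x_n\|\to0$. Convergence of spectra is with respect to the Hausdorff metric on nonempty compact subsets of $\mathbb{C}$. *)

theory Defs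
  imports "HOL-Analysis.Analysis"
begin

class scaleC =
  fixes scaleC :: "complex \<Rightarrow> 'a \<Rightarrow> 'a"  (infixr \<open>*\<^sub>C\<close> 75)

class complex_banach_algebra_1 = real_normed_algebra_1 + banach + scaleC +
  assumes scaleR_scaleC: "scaleR r x = scaleC (complex_of_real r) x"
    and scaleC_add_right: "scaleC c (x + y) = scaleC c x + scaleC c y"
    and scaleC_add_left: "scaleC (c + d) x = scaleC c x + scaleC d x"
    and scaleC_scaleC: "scaleC c (scaleC d x) = scaleC (c * d) x"
    and scaleC_one: "scaleC 1 x = x"
    and norm_scaleC: "norm (scaleC c x) = cmod c * norm x"
    and mult_scaleC_left: "scaleC c x * y = scaleC c (x * y)"
    and mult_scaleC_right: "x * scaleC c y = scaleC c (x * y)"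

definition invertible_elem :: "'a::complex_banach_algebra_1 \<Rightarrow> bool" where
  "invertible_elem x \<longleftrightarrow> (\<exists>y. x * y = 1 \<and> y * x = 1)"

definition spectrum :: "'a::complex_banach_algebra_1 \<Rightarrow> complex set" where
  "spectrum x = {l. \<not> invertible_elem (x - scaleC l 1)}"

definition nu_conv :: "(nat \<Rightarrow> 'a::complex_banach_algebra_1) \<Rightarrow> 'a \<Rightarrow> bool" where
  "nu_conv xs x \<longleftrightarrow> bounded (range (\<lambda>n. norm (xs n))) \<and>
     (\<lambda>n. norm ((xs n - x) * x)) \<longlonglongrightarrow> 0 \<and>
     (\<lambda>n. norm ((xs n - x) * xs n)) \<longlonglongrightarrow> 0"

definition hausdorff_dist :: "complex set \<Rightarrow> complex set \<Rightarrow> real" where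
  "hausdorff_dist S T = max (SUP x\<in>S. infdist x T) (SUP y\<in>T. infdist y S)"

end

theory Submission
  imports Defs
begin

text \<open>For commuting x and y, every point l of the spectrum of y lies within
c = root k (norm ((x - y)^k)) of the spectrum of x. Otherwise some closed ball of radius s > c
about l misses the spectrum of x; then the resolvent R = (x - l)^-1 satisfies
norm (R^N) * s^N < 1 for suitable N, while norm ((x - y)^N) <= c^N, so 1 - R (x - y) is
invertible by a Neumann series and so is y - l = (x - l) (1 - R (x - y)).
For the resolvent estimate we use that if 1 - \<nu> Y is invertible for all |\<nu>| <= 1, then
norm (Y^(2^m)) < 1 for some m. This is shown without complex analysis: the inverse of
1 - (\<nu> Y)^(2^(m+1)) is the average of the inverses of 1 - (\<nu> Y)^(2^m) and
1 + (\<nu> Y)^(2^m), which is the former at a rotated \<nu>. Hence all these inverses share the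
modulus of uniform continuity of the first one on the disc, and one can walk from 0 to 1.
Finally, nu-convergence gives norm ((a_n - a)^2) \<longlonglongrightarrow> 0, so with k = 2 the Hausdorff
distance tends to 0.\<close>

lemma scaleC_zero_left [simp]: "0 *\<^sub>C (x::'a::complex_banach_algebra_1) = 0"
  using scaleR_scaleC[of 0 x] by simp

lemma scaleC_diff_right: "c *\<^sub>C (x - y::'a::complex_banach_algebra_1) = c *\<^sub>C x - c *\<^sub>C y"
  by (metis add_diff_cancel_right' diff_add_cancel scaleC_add_right)

lemma scaleC_power: "(c *\<^sub>C (x::'a::complex_banach_algebra_1)) ^ n = (c ^ n) *\<^sub>C (x ^ n)"
  by (induct n) (simp_all add: scaleC_one mult_scaleC_left mult_scaleC_right scaleC_scaleC mult.commute)

lemma bounded_linear_scaleC_left: "bounded_linear (\<lambda>c. c *\<^sub>C (x::'a::complex_banach_algebra_1))"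
proof (rule bounded_linear_intro[where K = "norm x"])
  show "(c + d) *\<^sub>C x = c *\<^sub>C x + d *\<^sub>C x" for c d by (rule scaleC_add_left)
  show "(r *\<^sub>R c) *\<^sub>C x = r *\<^sub>R (c *\<^sub>C x)" for r c
    by (simp add: scaleR_scaleC scaleC_scaleC scaleR_conv_of_real)
  show "norm (c *\<^sub>C x) \<le> norm c * norm x" for c by (simp add: norm_scaleC)
qed

definition elem_inverse :: "'a::complex_banach_algebra_1 \<Rightarrow> 'a" where
  "elem_inverse u = (SOME v. u * v = 1 \<and> v * u = 1)"

lemma
  assumes "invertible_elem u"
  shows right_elem_inverse: "u * elem_inverse u = 1"
    and left_elem_inverse: "elem_inverse u * u = 1"
  using someI_ex[OF assms[unfolded invertible_elem_def]] by (simp_all add: elem_inverse_def)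

lemma invertible_elemI:
  fixes u :: "'a::complex_banach_algebra_1"
  assumes "u * v = 1" "w * u = 1"
  shows "invertible_elem u"
proof -
  have "v = w * u * v" using assms(2) by simp
  also have "\<dots> = w" using assms(1) by (simp add: mult.assoc)
  finally show ?thesis using assms unfolding invertible_elem_def by blast
qed

lemma elem_inverse_eq:
  fixes u :: "'a::complex_banach_algebra_1"
  assumes "u * v = 1" "v * u = 1"
  shows "elem_inverse u = v"
proof -
  have "elem_inverse u = elem_inverse u * (u * v)" using assms(1) by simp
  also have "\<dots> = v"
    using left_elem_inverse[OF invertible_elemI[OF assms]] by (simp flip: mult.assoc)
  finally show ?thesis .
qed

lemma invertible_elem_mult:
  fixes u :: "'a::complex_banach_algebra_1"
  assumes "invertible_elem u" "invertible_elem v"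
  shows "invertible_elem (u * v)"
proof (rule invertible_elemI)
  show "u * v * (elem_inverse v * elem_inverse u) = 1"
    by (metis assms right_elem_inverse mult.assoc mult_1_left)
  show "elem_inverse v * elem_inverse u * (u * v) = 1"
    by (metis assms left_elem_inverse mult.assoc mult_1_left)
qed

lemma elem_inverse_commute:
  fixes u :: "'a::complex_banach_algebra_1"
  assumes "invertible_elem u" "u * v = v * u"
  shows "elem_inverse u * v = v * elem_inverse u"
proof -
  have "elem_inverse u * v = elem_inverse u * v * (u * elem_inverse u)"
    using right_elem_inverse[OF assms(1)] by simp
  also have "\<dots> = elem_inverse u * (u * v) * elem_inverse u" by (simp add: assms(2) mult.assoc)
  also have "\<dots> = v * elem_inverse u" using left_elem_inverse[OF assms(1)] by (simp flip: mult.assoc)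
  finally show ?thesis .
qed

lemma invertible_elem_if_mult_commute:
  fixes u :: "'a::complex_banach_algebra_1"
  assumes "u * g = g * u" "invertible_elem (u * g)"
  shows "invertible_elem u"
proof (rule invertible_elemI)
  show "u * (g * elem_inverse (u * g)) = 1"
    using right_elem_inverse[OF assms(2)] by (simp add: mult.assoc)
  show "elem_inverse (u * g) * g * u = 1"
    using left_elem_inverse[OF assms(2)] by (simp add: assms(1) mult.assoc)
qed

lemma invertible_one_minus:
  fixes w :: "'a::complex_banach_algebra_1"
  assumes "norm w < 1"
  shows "invertible_elem (1 - w)"
proof -
  have summable: "summable (\<lambda>k. w ^ k)"
    using assms by (rule complete_algebra_summable_geometric)
  define S where "S = (\<Sum>k. w ^ k)"
  have tail: "(\<Sum>k. w ^ Suc k) = S - 1"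
    using suminf_split_head[OF summable] by (simp add: S_def)
  have "w * S = S - 1"
    using suminf_mult[OF summable, of w] tail by (simp add: S_def)
  moreover have "S * w = S - 1"
    using suminf_mult2[OF summable, of w] tail by (simp add: S_def power_commutes)
  ultimately show ?thesis
    by (intro invertible_elemI[of _ S S]) (simp_all add: left_diff_distrib right_diff_distrib)
qed

lemma one_minus_mult_geometric_sum:
  fixes z :: "'a::ring_1"
  shows "(1 - z) * (\<Sum>k<N. z ^ k) = 1 - z ^ N"
  by (induct N) (simp_all add: distrib_left left_diff_distrib)

lemma invertible_one_minus_if_norm_power:
  fixes z :: "'a::complex_banach_algebra_1"
  assumes "norm (z ^ N) < 1"
  shows "invertible_elem (1 - z)"
proof (rule invertible_elem_if_mult_commute)
  show "(1 - z) * (\<Sum>k<N. z ^ k) = (\<Sum>k<N. z ^ k) * (1 - z)"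
  proof -
    have "z * (\<Sum>k<N. z ^ k) = (\<Sum>k<N. z ^ k) * z"
      by (simp add: sum_distrib_left sum_distrib_right power_commutes)
    then show ?thesis by (simp add: left_diff_distrib right_diff_distrib)
  qed
  show "invertible_elem ((1 - z) * (\<Sum>k<N. z ^ k))"
    unfolding one_minus_mult_geometric_sum using assms by (rule invertible_one_minus)
qed

lemma elem_inverse_diff:
  fixes u v :: "'a::complex_banach_algebra_1"
  assumes "invertible_elem u" "invertible_elem v"
  shows "elem_inverse v - elem_inverse u = elem_inverse v * (u - v) * elem_inverse u"
  using assms by (simp add: algebra_simps right_elem_inverse mult.assoc left_elem_inverse
      flip: mult.assoc[of "elem_inverse v" v])

lemma norm_elem_inverse_diff_le:
  fixes u v :: "'a::complex_banach_algebra_1"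
  assumes "invertible_elem u" "invertible_elem v"
    and small: "norm (u - v) * norm (elem_inverse u) \<le> 1/2"
  shows "norm (elem_inverse v - elem_inverse u) \<le> 2 * norm (elem_inverse u)^2 * norm (u - v)"
proof -
  define M where "M = norm (elem_inverse u)"
  have diff: "norm (elem_inverse v - elem_inverse u) \<le> norm (elem_inverse v) * norm (u - v) * M"
    unfolding elem_inverse_diff[OF assms(1,2)] M_def
    by (metis mult_right_mono norm_ge_zero norm_mult_ineq order_trans)
  have "norm (elem_inverse v) \<le> M + norm (elem_inverse v - elem_inverse u)"
    unfolding M_def by (metis add.commute diff_add_cancel norm_triangle_ineq)
  also have "\<dots> \<le> M + norm (elem_inverse v) * (norm (u - v) * M)"
    using diff by (simp add: mult.assoc)
  also have "\<dots> \<le> M + norm (elem_inverse v) * (1/2)"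
    using small by (intro add_left_mono mult_left_mono) (auto simp: M_def)
  finally have "norm (elem_inverse v) \<le> 2 * M" by simp
  then have "norm (elem_inverse v) * norm (u - v) * M \<le> 2 * M * norm (u - v) * M"
    by (intro mult_right_mono) (auto simp: M_def)
  with diff show ?thesis by (simp add: M_def power2_eq_square mult_ac)
qed

lemma continuous_on_elem_inverse:
  "continuous_on {u::'a::complex_banach_algebra_1. invertible_elem u} elem_inverse"
  unfolding continuous_on_iff
proof (intro ballI allI impI)
  fix u :: 'a and e :: real
  assume u: "u \<in> {u. invertible_elem u}" and e: "e > 0"
  define K where "K = norm (elem_inverse u) + 1"
  have K: "K > 0" "norm (elem_inverse u) \<le> K" by (simp_all add: K_def add_nonneg_pos)
  show "\<exists>d>0. \<forall>v\<in>{u. invertible_elem u}. dist v u < d \<longrightarrow> dist (elem_inverse v) (elem_inverse u) < e"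
  proof (intro exI[of _ "min (1 / (2 * K)) (e / (2 * K^2))"] conjI ballI impI)
    show "min (1 / (2 * K)) (e / (2 * K^2)) > 0" using K e by simp
    fix v assume v: "v \<in> {u. invertible_elem u}" and "dist v u < min (1 / (2 * K)) (e / (2 * K^2))"
    then have close: "norm (u - v) < 1 / (2 * K)" "norm (u - v) < e / (2 * K^2)"
      by (simp_all add: dist_norm norm_minus_commute)
    have "norm (u - v) * norm (elem_inverse u) \<le> norm (u - v) * K"
      using K by (intro mult_left_mono) auto
    also have "\<dots> \<le> 1/2" using close(1) K by (simp add: field_simps)
    finally have "norm (elem_inverse v - elem_inverse u) \<le> 2 * norm (elem_inverse u)^2 * norm (u - v)"
      using u v by (intro norm_elem_inverse_diff_le) auto
    also have "\<dots> \<le> 2 * K^2 * norm (u - v)"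
      using K by (intro mult_right_mono mult_left_mono power_mono) auto
    also have "\<dots> < e" using close(2) K by (simp add: field_simps)
    finally show "dist (elem_inverse v) (elem_inverse u) < e" by (simp add: dist_norm)
  qed
qed

lemma continuous_on_resolvent:
  fixes y :: "'a::complex_banach_algebra_1"
  assumes "\<forall>\<nu>\<in>S. invertible_elem (1 - \<nu> *\<^sub>C y)"
  shows "continuous_on S (\<lambda>\<nu>. elem_inverse (1 - \<nu> *\<^sub>C y))"
proof (rule continuous_on_compose2[OF continuous_on_elem_inverse])
  show "continuous_on S (\<lambda>\<nu>. 1 - \<nu> *\<^sub>C y)"
    using continuous_on_const linear_continuous_on[OF bounded_linear_scaleC_left]
    by (rule continuous_on_diff)
qed (use assms in auto)

lemma invertible_one_minus_square:
  fixes W :: "'a::complex_banach_algebra_1"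
  assumes "invertible_elem (1 - W)" "invertible_elem (1 + W)"
  shows "invertible_elem (1 - W^2)"
proof -
  have "1 - W^2 = (1 + W) * (1 - W)" by (simp add: algebra_simps power2_eq_square)
  then show ?thesis by (simp add: assms invertible_elem_mult)
qed

lemma elem_inverse_one_minus_square:
  fixes W :: "'a::complex_banach_algebra_1"
  assumes "invertible_elem (1 - W)" "invertible_elem (1 + W)"
  shows "elem_inverse (1 - W^2) = (1/2) *\<^sub>R (elem_inverse (1 - W) + elem_inverse (1 + W))"
proof (rule elem_inverse_eq)
  define a b where "a = elem_inverse (1 - W)" and "b = elem_inverse (1 + W)"
  have a: "(1 - W) * a = 1" "a * (1 - W) = 1" and b: "(1 + W) * b = 1" "b * (1 + W) = 1"
    using assms by (simp_all add: a_def b_def right_elem_inverse left_elem_inverse)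
  have factor: "1 - W^2 = (1 + W) * (1 - W)" "1 - W^2 = (1 - W) * (1 + W)"
    by (simp_all add: algebra_simps power2_eq_square)
  have "(1 - W^2) * a = 1 + W" by (simp only: factor(1) mult.assoc a mult_1_right)
  moreover have "(1 - W^2) * b = 1 - W" by (simp only: factor(2) mult.assoc b mult_1_right)
  ultimately have right: "(1 - W^2) * (a + b) = 1 + 1" by (simp add: distrib_left)
  show "(1 - W^2) * ((1/2) *\<^sub>R (a + b)) = 1"
    by (simp only: mult_scaleR_right right scaleR_half_double)
  have "a * (1 - W^2) = 1 + W" by (simp only: factor(2) a mult_1_left flip: mult.assoc)
  moreover have "b * (1 - W^2) = 1 - W" by (simp only: factor(1) b mult_1_left flip: mult.assoc)
  ultimately have left: "(a + b) * (1 - W^2) = 1 + 1" by (simp add: distrib_right)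
  show "(1/2) *\<^sub>R (a + b) * (1 - W^2) = 1"
    by (simp only: mult_scaleR_left left scaleR_half_double)
qed

lemma scaleC_rotation_two_power:
  fixes y :: "'a::complex_banach_algebra_1"
  shows "((cis (pi / 2^m) * \<nu>) *\<^sub>C y) ^ 2^m = - ((\<nu> *\<^sub>C y) ^ 2^m)"
proof -
  have "cis (pi / 2^m) ^ 2^m = -1" by (simp add: Complex.DeMoivre)
  moreover have "(-1) *\<^sub>C x = - x" for x :: 'a
    using scaleR_scaleC[of "-1" x] by simp
  ultimately show ?thesis by (simp add: scaleC_power flip: scaleC_scaleC)
qed

lemma two_power_resolvents_modulus:
  fixes y :: "'a::complex_banach_algebra_1"
  assumes "\<forall>\<nu>\<in>cball 0 1. invertible_elem (1 - \<nu> *\<^sub>C y)"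
    and "\<forall>\<nu>\<in>cball 0 1. \<forall>\<nu>'\<in>cball 0 1. dist \<nu>' \<nu> < \<delta> \<longrightarrow>
           dist (elem_inverse (1 - \<nu>' *\<^sub>C y)) (elem_inverse (1 - \<nu> *\<^sub>C y)) < \<epsilon>"
  shows "(\<forall>\<nu>\<in>cball 0 1. invertible_elem (1 - (\<nu> *\<^sub>C y) ^ 2^m)) \<and>
    (\<forall>\<nu>\<in>cball 0 1. \<forall>\<nu>'\<in>cball 0 1. dist \<nu>' \<nu> < \<delta> \<longrightarrow>
       dist (elem_inverse (1 - (\<nu>' *\<^sub>C y) ^ 2^m)) (elem_inverse (1 - (\<nu> *\<^sub>C y) ^ 2^m)) < \<epsilon>)"
proof (induction m)
  case 0
  then show ?case using assms by simp
next
  case (Suc m)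
  let ?R = "\<lambda>\<nu>. elem_inverse (1 - (\<nu> *\<^sub>C y) ^ 2^m)"
  define \<omega> where "\<omega> = cis (pi / 2^m)"
  have rotate: "\<omega> * \<nu> \<in> cball 0 1" if "\<nu> \<in> cball 0 1" for \<nu>
    using that by (simp add: \<omega>_def norm_mult)
  have square: "(\<nu> *\<^sub>C y) ^ 2^Suc m = ((\<nu> *\<^sub>C y) ^ 2^m)^2" for \<nu>
    by (simp add: power_mult[symmetric] mult.commute)
  have step: "invertible_elem (1 - (\<nu> *\<^sub>C y) ^ 2^Suc m) \<and>
      elem_inverse (1 - (\<nu> *\<^sub>C y) ^ 2^Suc m) = (1/2) *\<^sub>R (?R \<nu> + ?R (\<omega> * \<nu>))"
    if "\<nu> \<in> cball 0 1" for \<nu>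
  proof -
    have rotated: "?R (\<omega> * \<nu>) = elem_inverse (1 + (\<nu> *\<^sub>C y) ^ 2^m)"
      by (simp add: \<omega>_def scaleC_rotation_two_power)
    have "invertible_elem (1 - (\<nu> *\<^sub>C y) ^ 2^m)" using Suc that by blast
    moreover have "invertible_elem (1 - ((\<omega> * \<nu>) *\<^sub>C y) ^ 2^m)" using Suc rotate[OF that] by blast
    then have "invertible_elem (1 + (\<nu> *\<^sub>C y) ^ 2^m)"
      by (simp add: \<omega>_def scaleC_rotation_two_power)
    ultimately show ?thesis
      unfolding square rotated using invertible_one_minus_square elem_inverse_one_minus_square by blast
  qed
  show ?case
  proof (intro conjI ballI impI)
    fix \<nu> assume "\<nu> \<in> cball (0::complex) 1"
    then show "invertible_elem (1 - (\<nu> *\<^sub>C y) ^ 2^Suc m)" using step by blast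
  next
    fix \<nu> \<nu>' assume \<nu>: "\<nu> \<in> cball (0::complex) 1" "\<nu>' \<in> cball (0::complex) 1" "dist \<nu>' \<nu> < \<delta>"
    have "dist (\<omega> * \<nu>') (\<omega> * \<nu>) < \<delta>"
      using \<nu>(3) by (simp add: dist_norm \<omega>_def norm_mult flip: right_diff_distrib)
    then have close: "norm (?R \<nu>' - ?R \<nu>) < \<epsilon>" "norm (?R (\<omega> * \<nu>') - ?R (\<omega> * \<nu>)) < \<epsilon>"
      using Suc \<nu> rotate by (simp_all add: dist_norm)
    have "elem_inverse (1 - (\<nu>' *\<^sub>C y) ^ 2^Suc m) - elem_inverse (1 - (\<nu> *\<^sub>C y) ^ 2^Suc m) =
        (1/2) *\<^sub>R ((?R \<nu>' - ?R \<nu>) + (?R (\<omega> * \<nu>') - ?R (\<omega> * \<nu>)))"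
      using step[OF \<nu>(1)] step[OF \<nu>(2)] by (simp add: algebra_simps)
    then have "dist (elem_inverse (1 - (\<nu>' *\<^sub>C y) ^ 2^Suc m)) (elem_inverse (1 - (\<nu> *\<^sub>C y) ^ 2^Suc m))
        \<le> (1/2) * (norm (?R \<nu>' - ?R \<nu>) + norm (?R (\<omega> * \<nu>') - ?R (\<omega> * \<nu>)))"
      by (simp add: dist_norm norm_triangle_ineq)
    also have "\<dots> < \<epsilon>" using close by simp
    finally show "dist (elem_inverse (1 - (\<nu>' *\<^sub>C y) ^ 2^Suc m))
        (elem_inverse (1 - (\<nu> *\<^sub>C y) ^ 2^Suc m)) < \<epsilon>" .
  qed
qed

lemma norm_elem_inverse_one_minus_diff_one_le:
  fixes U :: "'a::complex_banach_algebra_1"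
  assumes "norm U < 1"
  shows "norm (elem_inverse (1 - U) - 1) \<le> norm U / (1 - norm U)"
proof -
  define V where "V = elem_inverse (1 - U)"
  have "(1 - U) * V = 1" using right_elem_inverse[OF invertible_one_minus[OF assms]] by (simp add: V_def)
  then have "V - 1 = U * V" by (simp add: algebra_simps)
  then have "norm (V - 1) \<le> norm U * norm V" by (simp add: norm_mult_ineq)
  also have "\<dots> \<le> norm U * (1 + norm (V - 1))"
    by (intro mult_left_mono) (metis add.commute diff_add_cancel norm_one norm_triangle_ineq, simp)
  finally show ?thesis using assms by (simp add: V_def field_simps)
qed

lemma norm_less_one_if_elem_inverse_near_one:
  fixes U :: "'a::complex_banach_algebra_1"
  assumes "invertible_elem (1 - U)" "norm (elem_inverse (1 - U) - 1) < 1/2"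
  shows "norm U < 1"
proof -
  define V where "V = elem_inverse (1 - U)"
  have "V * (1 - U) = 1" using left_elem_inverse[OF assms(1)] by (simp add: V_def)
  then have "U = (V - 1) * (1 - U)" by (simp add: algebra_simps)
  then have "norm U \<le> norm (V - 1) * norm (1 - U)" by (metis norm_mult_ineq)
  also have "\<dots> \<le> norm (V - 1) * (1 + norm U)"
    by (intro mult_left_mono) (auto intro: order_trans[OF norm_triangle_ineq4])
  also have "\<dots> < (1/2) * (1 + norm U)"
    using assms(2) unfolding V_def by (intro mult_strict_right_mono) (auto simp: add_pos_nonneg)
  finally show ?thesis by simp
qed

lemma norm_two_power_le:
  fixes z :: "'a::real_normed_algebra_1"
  assumes "norm (z ^ 2^m\<^sub>0) < 1" "\<epsilon> > 0"
  shows "\<exists>m. norm (z ^ 2^m) \<le> \<epsilon>"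
proof -
  define q where "q = norm (z ^ 2^m\<^sub>0)"
  have q: "0 \<le> q" "q < 1" using assms by (simp_all add: q_def)
  obtain k where k: "q ^ k < \<epsilon>" using real_arch_pow_inv[OF assms(2) q(2)] by blast
  have "norm (z ^ 2^(m\<^sub>0 + k)) = norm ((z ^ 2^m\<^sub>0) ^ 2^k)"
    by (simp add: power_add power_mult)
  also have "\<dots> \<le> q ^ 2^k" unfolding q_def by (rule norm_power_ineq)
  also have "\<dots> \<le> q ^ k" using q by (intro power_decreasing) auto
  finally show ?thesis using k by (intro exI[of _ "m\<^sub>0 + k"]) simp
qed

lemma norm_two_power_less_one:
  fixes y :: "'a::complex_banach_algebra_1"
  assumes inv: "\<forall>\<nu>\<in>cball 0 1. invertible_elem (1 - \<nu> *\<^sub>C y)"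
  shows "\<exists>m. norm (y ^ 2^m) < 1"
proof -
  have "uniformly_continuous_on (cball 0 1) (\<lambda>\<nu>. elem_inverse (1 - \<nu> *\<^sub>C y))"
    by (intro compact_uniformly_continuous continuous_on_resolvent inv compact_cball)
  then obtain \<delta> where \<delta>: "\<delta> > 0" "\<forall>\<nu>\<in>cball 0 1. \<forall>\<nu>'\<in>cball 0 1. dist \<nu>' \<nu> < \<delta> \<longrightarrow>
      dist (elem_inverse (1 - \<nu>' *\<^sub>C y)) (elem_inverse (1 - \<nu> *\<^sub>C y)) < 1/8"
    unfolding uniformly_continuous_on_def by (meson zero_less_divide_1_iff zero_less_numeral)
  note modulus = two_power_resolvents_modulus[OF inv \<delta>(2)]
  define U where "U m s = (complex_of_real s *\<^sub>C y) ^ 2^m" for m s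
  define Q where "Q s \<longleftrightarrow> (\<exists>m. norm (U m s) < 1)" for s
  have propagate: "Q s" if s: "s \<in> {0..1}" "s' \<in> {0..1}" "\<bar>s - s'\<bar> < \<delta>" "Q s'" for s s'
  proof -
    obtain m\<^sub>0 where "norm (U m\<^sub>0 s') < 1" using \<open>Q s'\<close> by (auto simp: Q_def)
    then obtain m where m: "norm (U m s') \<le> 1/8"
      unfolding U_def using norm_two_power_le[of _ m\<^sub>0 "1/8"] by auto
    have disc: "complex_of_real s \<in> cball 0 1" "complex_of_real s' \<in> cball 0 1" using s by auto
    have "dist (complex_of_real s) (complex_of_real s') < \<delta>"
      using s(3) by (simp add: dist_norm flip: of_real_diff)
    then have inv_s: "invertible_elem (1 - U m s)"
      and close: "dist (elem_inverse (1 - U m s)) (elem_inverse (1 - U m s')) < 1/8"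
      using modulus disc unfolding U_def by blast+
    have "norm (elem_inverse (1 - U m s') - 1) \<le> norm (U m s') / (1 - norm (U m s'))"
      using m by (intro norm_elem_inverse_one_minus_diff_one_le) auto
    also have "\<dots> \<le> 1/7" using m by (simp add: field_simps)
    finally have "norm (elem_inverse (1 - U m s) - 1) < 1/2"
      using close norm_triangle_ineq[of "elem_inverse (1 - U m s) - elem_inverse (1 - U m s')"
          "elem_inverse (1 - U m s') - 1"] by (simp add: dist_norm)
    then show ?thesis
      using norm_less_one_if_elem_inverse_near_one[OF inv_s] by (auto simp: Q_def)
  qed
  have "Q (min 1 (real k * \<delta> / 2))" for k
  proof (induction k)
    case 0
    show ?case by (auto simp: Q_def U_def intro: exI[of _ 0])
  next
    case (Suc k)
    define a where "a = real k * \<delta> / 2"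
    have "0 \<le> a" "real (Suc k) * \<delta> / 2 = a + \<delta> / 2"
      using \<delta>(1) by (simp_all add: a_def field_simps)
    moreover have "min 1 (a + \<delta> / 2) \<in> {0..1}" "min 1 a \<in> {0..1}"
      "\<bar>min 1 (a + \<delta> / 2) - min 1 a\<bar> < \<delta>"
      using \<open>0 \<le> a\<close> \<delta>(1) by (auto simp: min_def)
    ultimately show ?case using propagate Suc.IH unfolding a_def by metis
  qed
  moreover obtain k :: nat where "2 / \<delta> \<le> k" using real_arch_simple by blast
  then have "min 1 (real k * \<delta> / 2) = 1" using \<delta>(1) by (simp add: field_simps)
  ultimately have "Q 1" by metis
  then show ?thesis by (simp add: Q_def U_def scaleC_one)
qed

lemma power_mult_distrib_commuting:
  fixes u v :: "'a::monoid_mult"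
  assumes "u * v = v * u"
  shows "(u * v) ^ n = u ^ n * v ^ n"
proof (induction n)
  case (Suc n)
  have "(u * v) ^ Suc n = u * (v * u ^ n) * v ^ n" by (simp add: Suc mult.assoc)
  also have "\<dots> = u ^ Suc n * v ^ Suc n"
    by (simp add: power_commuting_commutes[OF assms, symmetric] mult.assoc)
  finally show ?case .
qed simp

lemma norm_power_diff_commute:
  fixes x y :: "'a::real_normed_algebra_1"
  shows "norm ((x - y) ^ k) = norm ((y - x) ^ k)"
proof -
  have "(x - y) ^ k = (-1) ^ k * (y - x) ^ k" by (simp flip: power_minus)
  then show ?thesis by (cases "even k") simp_all
qed

lemma resolvent_power_norm_less:
  fixes x :: "'a::complex_banach_algebra_1"
  assumes disjoint: "cball l s \<inter> spectrum x = {}" and "s > 0"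
  shows "\<exists>m. s ^ 2^m * norm (elem_inverse (x - l *\<^sub>C 1) ^ 2^m) < 1"
proof -
  define R where "R = elem_inverse (x - l *\<^sub>C 1)"
  have "l \<in> cball l s" using \<open>s > 0\<close> by simp
  then have "l \<notin> spectrum x" using disjoint by blast
  then have "invertible_elem (x - l *\<^sub>C 1)" by (simp add: spectrum_def)
  then have R: "R * (x - l *\<^sub>C 1) = 1" "invertible_elem R"
    using left_elem_inverse right_elem_inverse invertible_elemI unfolding R_def by metis+
  have "invertible_elem (1 - \<nu> *\<^sub>C (complex_of_real s *\<^sub>C R))" if "\<nu> \<in> cball 0 1" for \<nu>
  proof -
    have "dist l (l + \<nu> * s) \<le> s"
      using that \<open>s > 0\<close> by (simp add: dist_norm norm_mult mult_left_le_one_le)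
    then have "l + \<nu> * s \<notin> spectrum x" using disjoint by auto
    then have "invertible_elem (R * (x - (l + \<nu> * s) *\<^sub>C 1))"
      by (simp add: spectrum_def invertible_elem_mult R(2))
    also have "R * (x - (l + \<nu> * s) *\<^sub>C 1) = 1 - \<nu> *\<^sub>C (complex_of_real s *\<^sub>C R)"
      using R(1) by (simp add: scaleC_add_left algebra_simps mult_scaleC_right scaleC_scaleC)
    finally show ?thesis .
  qed
  then obtain m where "norm ((complex_of_real s *\<^sub>C R) ^ 2^m) < 1"
    using norm_two_power_less_one by blast
  then show ?thesis using \<open>s > 0\<close> by (auto simp: R_def scaleC_power norm_scaleC norm_power)
qed

lemma cball_spectrum_disjoint_radius_le:
  fixes x y :: "'a::complex_banach_algebra_1"
  assumes commute: "x * y = y * x" and l: "l \<in> spectrum y" and "k > 0"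
    and disjoint: "cball l s \<inter> spectrum x = {}"
  shows "s \<le> root k (norm ((x - y) ^ k))"
proof (rule ccontr)
  define c where "c = root k (norm ((x - y) ^ k))"
  define X R where "X = x - l *\<^sub>C 1" and "R = elem_inverse X"
  assume "\<not> s \<le> root k (norm ((x - y) ^ k))"
  then have "c < s" "0 \<le> c" using \<open>k > 0\<close> by (simp_all add: c_def)
  then obtain m where m: "s ^ 2^m * norm (R ^ 2^m) < 1"
    using resolvent_power_norm_less[OF disjoint] by (auto simp: R_def X_def)
  define N where "N = k * 2^m"
  have "norm (R ^ N) \<le> norm (R ^ 2^m) ^ k"
    unfolding N_def power_mult mult.commute[of k] by (rule norm_power_ineq)
  then have "norm (R ^ N) * s ^ N \<le> norm (R ^ 2^m) ^ k * s ^ N"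
    using \<open>c < s\<close> \<open>0 \<le> c\<close> by (intro mult_right_mono) auto
  also have "\<dots> = (s ^ 2^m * norm (R ^ 2^m)) ^ k"
    by (simp add: N_def power_mult power_mult_distrib mult.commute[of k])
  also have "\<dots> < 1" using m \<open>k > 0\<close> \<open>c < s\<close> \<open>0 \<le> c\<close> by (simp add: power_less_one_iff)
  finally have R_N: "norm (R ^ N) * s ^ N < 1" .
  have "norm ((x - y) ^ N) \<le> norm ((x - y) ^ k) ^ 2^m"
    unfolding N_def power_mult by (rule norm_power_ineq)
  also have "\<dots> = c ^ N"
    using \<open>k > 0\<close> by (simp add: c_def N_def power_mult real_root_pow_pos2)
  also have "\<dots> \<le> s ^ N" using \<open>c < s\<close> \<open>0 \<le> c\<close> by (intro power_mono) auto
  finally have diff_N: "norm ((x - y) ^ N) \<le> s ^ N" .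
  have "l \<in> cball l s" using \<open>0 \<le> c\<close> \<open>c < s\<close> by simp
  then have "l \<notin> spectrum x" using disjoint by blast
  then have inv_X: "invertible_elem X" by (simp add: X_def spectrum_def)
  have "X * (x - y) = (x - y) * X"
    using commute
    by (simp add: X_def left_diff_distrib right_diff_distrib mult_scaleC_left mult_scaleC_right
        scaleC_diff_right)
  then have RD: "R * (x - y) = (x - y) * R" unfolding R_def by (rule elem_inverse_commute[OF inv_X])
  have "norm ((R * (x - y)) ^ N) \<le> norm (R ^ N) * norm ((x - y) ^ N)"
    unfolding power_mult_distrib_commuting[OF RD] by (rule norm_mult_ineq)
  also have "\<dots> \<le> norm (R ^ N) * s ^ N" using diff_N by (simp add: mult_left_mono)
  also have "\<dots> < 1" by (fact R_N)
  finally have "invertible_elem (X * (1 - R * (x - y)))"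
    by (intro invertible_elem_mult inv_X invertible_one_minus_if_norm_power)
  also have "X * (1 - R * (x - y)) = y - l *\<^sub>C 1"
    using right_elem_inverse[OF inv_X] by (simp add: R_def X_def algebra_simps flip: mult.assoc)
  finally show False using l by (simp add: spectrum_def)
qed

lemma spectrum_nonempty_if_commuting:
  fixes x y :: "'a::complex_banach_algebra_1"
  assumes "x * y = y * x" "spectrum y \<noteq> {}"
  shows "spectrum x \<noteq> {}"
proof
  assume "spectrum x = {}"
  obtain l where "l \<in> spectrum y" using assms(2) by blast
  then have "norm (x - y) + 1 \<le> root 1 (norm ((x - y) ^ 1))"
    by (intro cball_spectrum_disjoint_radius_le[OF assms(1)]) (simp_all add: \<open>spectrum x = {}\<close>)
  then show False by simp
qed

lemma infdist_spectrum_le: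
  fixes x y :: "'a::complex_banach_algebra_1"
  assumes "x * y = y * x" "l \<in> spectrum y" "k > 0"
  shows "infdist l (spectrum x) \<le> root k (norm ((x - y) ^ k))"
proof (rule dense_le)
  fix s assume s: "s < infdist l (spectrum x)"
  have "cball l s \<inter> spectrum x = {}"
  proof (rule ccontr)
    assume "cball l s \<inter> spectrum x \<noteq> {}"
    then obtain \<mu> where "\<mu> \<in> spectrum x" "dist l \<mu> \<le> s" by auto
    then show False using infdist_le[of \<mu> "spectrum x" l] s by simp
  qed
  then show "s \<le> root k (norm ((x - y) ^ k))" by (rule cball_spectrum_disjoint_radius_le[OF assms])
qed

lemma abs_hausdorff_dist_le:
  assumes "S \<noteq> {}" "T \<noteq> {}" "\<forall>s\<in>S. infdist s T \<le> c" "\<forall>t\<in>T. infdist t S \<le> c"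
  shows "\<bar>hausdorff_dist S T\<bar> \<le> c"
proof -
  have "(SUP s\<in>S. infdist s T) \<le> c" "(SUP t\<in>T. infdist t S) \<le> c"
    using assms by (auto intro!: cSUP_least)
  moreover obtain t where "t \<in> T" using assms(2) by blast
  then have "0 \<le> (SUP t\<in>T. infdist t S)"
    using assms(4) by (intro cSUP_upper2[where x = t] bdd_aboveI2[where M = c] infdist_nonneg) auto
  ultimately show ?thesis by (simp add: hausdorff_dist_def)
qed

lemma abs_hausdorff_dist_spectrum_le:
  fixes x y :: "'a::complex_banach_algebra_1"
  assumes "x * y = y * x" "spectrum y \<noteq> {}" "k > 0"
  shows "\<bar>hausdorff_dist (spectrum x) (spectrum y)\<bar> \<le> root k (norm ((x - y) ^ k))"
proof (rule abs_hausdorff_dist_le)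
  show "spectrum x \<noteq> {}" using assms(1,2) by (rule spectrum_nonempty_if_commuting)
  show "\<forall>l\<in>spectrum y. infdist l (spectrum x) \<le> root k (norm ((x - y) ^ k))"
    using assms(1,3) infdist_spectrum_le by blast
  show "\<forall>l\<in>spectrum x. infdist l (spectrum y) \<le> root k (norm ((x - y) ^ k))"
    using assms(1,3) infdist_spectrum_le[of y x] by (simp add: norm_power_diff_commute)
qed (fact assms(2))

lemma nu_conv_norm_square_diff_tendsto_zero:
  assumes "nu_conv xs x"
  shows "(\<lambda>n. norm ((xs n - x)^2)) \<longlonglongrightarrow> 0"
proof (rule tendsto_norm_zero, rule Lim_null_comparison)
  show "\<forall>\<^sub>F n in sequentially. norm ((xs n - x)^2) \<le> norm ((xs n - x) * xs n) + norm ((xs n - x) * x)"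
  proof (intro always_eventually allI)
    fix n
    have "(xs n - x)^2 = (xs n - x) * xs n - (xs n - x) * x"
      by (simp add: power2_eq_square right_diff_distrib)
    then show "norm ((xs n - x)^2) \<le> norm ((xs n - x) * xs n) + norm ((xs n - x) * x)"
      by (simp add: norm_triangle_ineq4)
  qed
  show "(\<lambda>n. norm ((xs n - x) * xs n) + norm ((xs n - x) * x)) \<longlonglongrightarrow> 0"
    using assms unfolding nu_conv_def by (intro tendsto_add_zero) auto
qed

theorem proposition2p1:
  fixes a :: "'a::complex_banach_algebra_1" and as :: "nat \<Rightarrow> 'a"
  assumes "\<And>n. as n * a = a * as n"
    and "\<And>n m. as n * as m = as m * as n"
    and "nu_conv as a"
    and "(0::complex) islimpt spectrum a"
  shows "(\<lambda>n. hausdorff_dist (spectrum (as n)) (spectrum a)) \<longlonglongrightarrow> 0"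
proof (rule Lim_null_comparison)
  have "spectrum a \<noteq> {}" using assms(4) by auto
  then show "\<forall>\<^sub>F n in sequentially.
      norm (hausdorff_dist (spectrum (as n)) (spectrum a)) \<le> root 2 (norm ((as n - a)^2))"
    using abs_hausdorff_dist_spectrum_le[OF assms(1), where k = 2] by (simp add: always_eventually)
  show "(\<lambda>n. root 2 (norm ((as n - a)^2))) \<longlonglongrightarrow> 0"
    using tendsto_real_root[OF nu_conv_norm_square_diff_tendsto_zero[OF assms(3)], of 2] by simp
qed

end
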